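(* Let $g,h:[0,1]\to\mathbb{R}$ be square integrable, piecewise continuous and strictly monotonic functions, let $U_0\sim\mathcal{U}(0,1)$ and let $F_g,F_h$ be the distribution functions of $g(U_0),h(U_0)$. Then: (i) $F_g$ and $F_h$ are continuous and $T_g=F_g\circ g$ and $T_h=F_h\circ h$ are uniform-distribution-preserving transformations; (ii) if $g$ and $h$ are continuous, $F_g$ and $F_h$ are strictly increasing on the range of $g$ and $h$ respectively; (iii) if $X,Y$ are continuous random variables and $U=F_X(X)$, $V=F_Y(Y)$, then $$\rho_{\{g,h\}}(X,Y)=\rho(g(U),h(V))=\rho\big(F_g^{-1}(T_g(U)),F_h^{-1}(T_h(V))\big).$$
   Context: $\psi$ is piecewise continuous and strictly monotonic if there is a finite partition $0=u_0<\dots<u_M=1$ such that $\psi$ restricted to each $(u_{m-1},u_m)$ is continuous and strictly monotonic (partitions of $g$ and $h$ may differ). A map $T:[0,1]\to[0,1]$ is uniform-distribution-preserving if $T(U)\sim\mathcal{U}(0,1)$ for $U\sim\mathcal{U}(0,1)$. $\rho_{\{g,h\}}(X,Y)=\rho(g(F_X(X)),h(F_Y(Y)))$ with $\rho$ Pearson correlation; $F^{-1}(u)=\inf\{x:F(x)\ge u\}$. *)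

theory Defs
  imports "HOL-Probability.Probability"
begin

definition U01 :: "real measure" where
  "U01 = restrict_space lborel {0..1}"

definition pw_cont_strict_mono :: "(real \<Rightarrow> real) \<Rightarrow> bool" where
  "pw_cont_strict_mono g \<longleftrightarrow>
     (\<exists>(M::nat) (u::nat \<Rightarrow> real). u 0 = 0 \<and> u M = 1 \<and> (\<forall>m<M. u m < u (Suc m)) \<and>
        (\<forall>m<M. continuous_on {u m<..<u (Suc m)} g \<and>
               (monotone_on {u m<..<u (Suc m)} (<) (<) g \<or>
                monotone_on {u m<..<u (Suc m)} (<) (>) g)))"

definition square_integrable01 :: "(real \<Rightarrow> real) \<Rightarrow> bool" where
  "square_integrable01 g \<longleftrightarrow> g \<in> borel_measurable U01 \<and> integrable U01 (\<lambda>u. (g u)^2)"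

definition unif_preserving :: "(real \<Rightarrow> real) \<Rightarrow> bool" where
  "unif_preserving T \<longleftrightarrow> T \<in> borel_measurable U01 \<and> distr U01 borel T = distr U01 borel (\<lambda>u. u)"

definition gen_inv :: "(real \<Rightarrow> real) \<Rightarrow> real \<Rightarrow> real" where
  "gen_inv F u = Inf {x. F x \<ge> u}"

definition pearson :: "'a measure \<Rightarrow> ('a \<Rightarrow> real) \<Rightarrow> ('a \<Rightarrow> real) \<Rightarrow> real" where
  "pearson M X Y =
     (\<integral>\<omega>. (X \<omega> - (\<integral>\<omega>. X \<omega> \<partial>M)) * (Y \<omega> - (\<integral>\<omega>. Y \<omega> \<partial>M)) \<partial>M) /
     sqrt ((\<integral>\<omega>. (X \<omega> - (\<integral>\<omega>. X \<omega> \<partial>M))^2 \<partial>M) * (\<integral>\<omega>. (Y \<omega> - (\<integral>\<omega>. Y \<omega> \<partial>M))^2 \<partial>M))"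

definition rho_gh :: "'a measure \<Rightarrow> (real \<Rightarrow> real) \<Rightarrow> (real \<Rightarrow> real) \<Rightarrow> ('a \<Rightarrow> real) \<Rightarrow> ('a \<Rightarrow> real) \<Rightarrow> real" where
  "rho_gh M g h X Y =
     pearson M (\<lambda>\<omega>. g (cdf (distr M borel X) (X \<omega>))) (\<lambda>\<omega>. h (cdf (distr M borel Y) (Y \<omega>)))"

end

theory Submission
  imports Defs
begin

text \<open>Each level set of \<open>g\<close> is finite, because \<open>g\<close> is injective on every piece of the
  partition, so \<open>g(U\<^sub>0)\<close> has no atoms and \<open>F\<^sub>g\<close> is continuous; the probability integral
  transform then makes \<open>T\<^sub>g = F\<^sub>g \<circ> g\<close> uniform. If \<open>g\<close> is continuous, two values \<open>r < s\<close> of \<open>g\<close>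
  are separated by an interval of positive length on which \<open>r < g < s\<close>, hence \<open>F\<^sub>g r < F\<^sub>g s\<close>.
  For (iii), \<open>U = F\<^sub>X(X)\<close> is again uniform, so it suffices that \<open>F\<^sub>g\<^sup>-\<^sup>1 (F\<^sub>g (g u)) = g u\<close> for
  almost every \<open>u\<close>. This fails only where \<open>F\<^sub>g\<close> is constant on an interval to the left of \<open>g u\<close>,
  and for each rational \<open>q\<close> the event \<open>q < g(U\<^sub>0) \<and> F\<^sub>g (g(U\<^sub>0)) \<le> F\<^sub>g q\<close> is null.\<close>

lemma space_U01: "space U01 = {0..1}"
  by (simp add: U01_def space_restrict_space)

lemma sets_U01_iff: "A \<in> sets U01 \<longleftrightarrow> A \<subseteq> {0..1} \<and> A \<in> sets borel"
  unfolding U01_def by (subst sets_restrict_space_iff) auto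

lemma measure_U01: "A \<in> sets borel \<Longrightarrow> A \<subseteq> {0..1} \<Longrightarrow> measure U01 A = measure lborel A"
  unfolding U01_def measure_def by (subst emeasure_restrict_space) auto

lemma prob_space_U01: "prob_space U01"
  unfolding U01_def by (rule prob_space_restrict_space) auto

lemma borel_measurable_U01_ident: "(\<lambda>u. u) \<in> borel_measurable U01"
  unfolding U01_def by (rule measurable_restrict_space1) simp

lemma cdf_distr: "X \<in> borel_measurable M \<Longrightarrow> cdf (distr M borel X) x = measure M {\<omega>\<in>space M. X \<omega> \<le> x}"
  unfolding cdf_def by (subst measure_distr) (auto simp: vimage_def Int_def conj_commute)

lemma cdf_U01: "cdf (distr U01 borel (\<lambda>u. u)) t = max 0 (min 1 t)"
proof -
  have "{u\<in>space U01. u \<le> t} = {0..min 1 t}"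
    by (auto simp: space_U01)
  then have "cdf (distr U01 borel (\<lambda>u. u)) t = measure U01 {0..min 1 t}"
    by (simp add: cdf_distr[OF borel_measurable_U01_ident])
  also have "\<dots> = max 0 (min 1 t)"
    by (subst measure_U01) auto
  finally show ?thesis .
qed

lemma (in real_distribution) cdf_sublevel_set_eq_atMost:
  assumes cont: "continuous_on UNIV (cdf M)" and "c < 1" and "cdf M x \<le> c"
  obtains m where "cdf M m = c" and "{x. cdf M x \<le> c} = {..m}"
proof -
  define S where "S = {x. cdf M x \<le> c}"
  have "eventually (\<lambda>x. c < cdf M x) at_top"
    using cdf_lim_at_top_prob \<open>c < 1\<close> by (rule order_tendstoD)
  then obtain x1 where x1: "c < cdf M x1"
    by (metis eventually_at_top_linorder order.refl)
  have "bdd_above S"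
    unfolding S_def bdd_above_def using x1 cdf_nondecreasing
    by (smt (verit) mem_Collect_eq)
  moreover have "closed S"
    unfolding S_def by (rule closed_Collect_le[OF cont]) simp
  moreover have "S \<noteq> {}"
    using assms(3) S_def by blast
  ultimately have m: "Sup S \<in> S" and upper: "\<And>x. x \<in> S \<Longrightarrow> x \<le> Sup S"
    by (auto intro: closed_contains_Sup cSup_upper)
  have "Sup S \<le> x1"
    using m x1 cdf_nondecreasing S_def by (smt (verit) mem_Collect_eq)
  then obtain z where z: "Sup S \<le> z" "cdf M z = c"
    using IVT'[of "cdf M" "Sup S" c x1] m x1 continuous_on_subset[OF cont] S_def by force
  then have "z = Sup S"
    using upper[of z] S_def by simp
  have "S = {..Sup S}"
    using upper m cdf_nondecreasing unfolding S_def by (auto intro: order_trans)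
  then show thesis
    using that z \<open>z = Sup S\<close> S_def by simp
qed

lemma measure_cdf_comp_le:
  assumes M: "prob_space M" and X[measurable]: "X \<in> borel_measurable M"
    and cont: "continuous_on UNIV (cdf (distr M borel X))"
  shows "measure M {\<omega>\<in>space M. cdf (distr M borel X) (X \<omega>) \<le> t} = max 0 (min 1 t)"
proof -
  interpret M: prob_space M by (rule M)
  interpret F: real_distribution "distr M borel X" by simp
  let ?F = "cdf (distr M borel X)"
  consider "1 \<le> t" | "t < 1" "\<exists>x. ?F x \<le> t" | "\<forall>x. t < ?F x"
    by (meson not_le)
  then show ?thesis
  proof cases
    case 1
    then have "{\<omega>\<in>space M. ?F (X \<omega>) \<le> t} = space M"
      using F.cdf_bounded_prob order_trans by blast
    then show ?thesis using 1 M.prob_space by simp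
  next
    case 2
    then obtain m where m: "?F m = t" "{x. ?F x \<le> t} = {..m}"
      using F.cdf_sublevel_set_eq_atMost[OF cont] by metis
    then have "{\<omega>\<in>space M. ?F (X \<omega>) \<le> t} = {\<omega>\<in>space M. X \<omega> \<le> m}"
      by auto
    moreover have "0 \<le> t"
      using m F.cdf_nonneg by metis
    ultimately show ?thesis
      using 2 m by (simp add: cdf_distr)
  next
    case 3
    have "t \<le> 0"
    proof (rule ccontr)
      assume "\<not> t \<le> 0"
      then have "eventually (\<lambda>x. ?F x < t) at_bot"
        using F.cdf_lim_at_bot by (intro order_tendstoD) auto
      then show False
        using 3 by (metis eventually_at_bot_linorder order.refl not_less_iff_gr_or_eq)
    qed
    moreover have "{\<omega>\<in>space M. ?F (X \<omega>) \<le> t} = {}"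
      using 3 by (auto simp: not_le[symmetric])
    ultimately show ?thesis
      by (metis max.absorb1 measure_empty min.absorb_iff2 order.trans zero_le_one)
  qed
qed

lemma cdf_comp_measurable_U01:
  assumes M: "prob_space M" and X[measurable]: "X \<in> borel_measurable M"
    and cont: "continuous_on UNIV (cdf (distr M borel X))"
  shows "(\<lambda>\<omega>. cdf (distr M borel X) (X \<omega>)) \<in> measurable M U01"
proof -
  interpret F: real_distribution "distr M borel X"
    using M by (simp add: prob_space.real_distribution_distr)
  note borel_measurable_continuous_onI[OF cont, measurable]
  show ?thesis
    unfolding U01_def measurable_lborel2[symmetric]
    by (rule measurable_restrict_space2) (auto simp: F.cdf_nonneg F.cdf_bounded_prob)
qed

lemma distr_cdf_comp_borel:
  assumes M: "prob_space M" and X[measurable]: "X \<in> borel_measurable M"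
    and cont: "continuous_on UNIV (cdf (distr M borel X))"
  shows "distr M borel (\<lambda>\<omega>. cdf (distr M borel X) (X \<omega>)) = distr U01 borel (\<lambda>u. u)"
proof (rule cdf_unique)
  note borel_measurable_continuous_onI[OF cont, measurable]
  show "real_distribution (distr M borel (\<lambda>\<omega>. cdf (distr M borel X) (X \<omega>)))"
    using M by (simp add: prob_space.real_distribution_distr)
  show "real_distribution (distr U01 borel (\<lambda>u. u))"
    using prob_space_U01 borel_measurable_U01_ident by (rule prob_space.real_distribution_distr)
  have U: "(\<lambda>\<omega>. cdf (distr M borel X) (X \<omega>)) \<in> borel_measurable M"
    by measurable
  show "cdf (distr M borel (\<lambda>\<omega>. cdf (distr M borel X) (X \<omega>))) = cdf (distr U01 borel (\<lambda>u. u))"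
    using measure_cdf_comp_le[OF M X cont] by (simp add: fun_eq_iff cdf_distr[OF U] cdf_U01)
qed

lemma distr_cdf_comp_U01:
  assumes M: "prob_space M" and X: "X \<in> borel_measurable M"
    and cont: "continuous_on UNIV (cdf (distr M borel X))"
  shows "distr M U01 (\<lambda>\<omega>. cdf (distr M borel X) (X \<omega>)) = U01"
proof (rule measure_eqI)
  let ?U = "\<lambda>\<omega>. cdf (distr M borel X) (X \<omega>)"
  have U: "?U \<in> measurable M U01"
    by (rule cdf_comp_measurable_U01[OF M X cont])
  have U': "?U \<in> borel_measurable M"
    using X borel_measurable_continuous_onI[OF cont] by measurable
  fix A assume "A \<in> sets (distr M U01 ?U)"
  then have A: "A \<in> sets borel" "A \<subseteq> {0..1}"
    by (simp_all add: sets_U01_iff)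
  have "emeasure (distr M U01 ?U) A = emeasure (distr M borel ?U) A"
    using U U' A by (simp add: emeasure_distr sets_U01_iff)
  also have "\<dots> = emeasure (distr U01 borel (\<lambda>u. u)) A"
    by (simp add: distr_cdf_comp_borel[OF M X cont])
  also have "\<dots> = emeasure U01 A"
    using A borel_measurable_U01_ident by (simp add: emeasure_distr space_U01 Int_absorb2)
  finally show "emeasure (distr M U01 ?U) A = emeasure U01 A" .
qed simp

lemma atLeastAtMost_subset_partition:
  fixes u :: "nat \<Rightarrow> real"
  assumes "\<forall>m<M. u m < u (Suc m)"
  shows "{u 0..u M} \<subseteq> u ` {..M} \<union> (\<Union>m<M. {u m<..<u (Suc m)})"
  using assms
proof (induction M)
  case (Suc M)
  have "{u 0..u (Suc M)} \<subseteq> {u 0..u M} \<union> {u M<..<u (Suc M)} \<union> {u (Suc M)}"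
    by auto
  moreover have "{u 0..u M} \<subseteq> u ` {..Suc M} \<union> (\<Union>m<Suc M. {u m<..<u (Suc m)})"
    using Suc by (auto simp: lessThan_Suc)
  ultimately show ?case
    by (auto simp: lessThan_Suc)
qed simp

lemma finite_level_set_if_pw_cont_strict_mono:
  assumes "pw_cont_strict_mono g"
  shows "finite {x\<in>{0..1}. g x = y}"
proof -
  obtain M and u :: "nat \<Rightarrow> real"
    where u: "u 0 = 0" "u M = 1" "\<forall>m<M. u m < u (Suc m)"
      and strict: "\<And>m. m < M \<Longrightarrow> monotone_on {u m<..<u (Suc m)} (<) (<) g \<or>
                                  monotone_on {u m<..<u (Suc m)} (<) (>) g"
    using assms unfolding pw_cont_strict_mono_def by metis
  have "inj_on g {u m<..<u (Suc m)}" if "m < M" for m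
    using strict[OF that] by (auto intro!: linorder_inj_onI' dest: monotone_onD)
  then have "finite (g -` {y} \<inter> {u m<..<u (Suc m)})" if "m < M" for m
    using that by (simp add: finite_vimage_IntI)
  then have "finite (u ` {..M} \<union> (\<Union>m<M. g -` {y} \<inter> {u m<..<u (Suc m)}))"
    by (intro finite_UnI finite_imageI finite_UN_I) auto
  moreover have "{x\<in>{0..1}. g x = y} \<subseteq> u ` {..M} \<union> (\<Union>m<M. g -` {y} \<inter> {u m<..<u (Suc m)})"
    using atLeastAtMost_subset_partition[OF u(3)] u(1,2) by auto
  ultimately show ?thesis
    by (rule finite_subset[rotated])
qed

lemma continuous_cdf_if_finite_level_sets:
  assumes g: "g \<in> borel_measurable U01" and fin: "\<And>y. finite {x\<in>{0..1}. g x = y}"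
  shows "continuous_on UNIV (cdf (distr U01 borel g))"
proof -
  interpret F: real_distribution "distr U01 borel g"
    using prob_space_U01 g by (rule prob_space.real_distribution_distr)
  have "measure (distr U01 borel g) {y} = 0" for y
  proof -
    have "measure (distr U01 borel g) {y} = measure U01 {x\<in>{0..1}. g x = y}"
      using g by (simp add: measure_distr space_U01 vimage_def Int_def conj_commute)
    also have "\<dots> = measure lborel {x\<in>{0..1}. g x = y}"
      using fin[of y] by (intro measure_U01) (auto intro: finite_imp_closed borel_closed)
    also have "\<dots> = 0"
      using fin[of y] by (simp add: measure_def emeasure_lborel_countable countable_finite)
    finally show ?thesis .
  qed
  then show ?thesis
    by (simp add: F.isCont_cdf continuous_at_imp_continuous_on)
qed

lemma IVT_greaterThanLessThan:
  fixes g :: "real \<Rightarrow> real"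
  assumes cont: "continuous_on {a..b} g" and st: "s \<in> {a..b}" "t \<in> {a..b}"
    and v: "g s < v" "v < g t"
  obtains c where "c \<in> {a<..<b}" and "g c = v"
proof -
  obtain c where c: "min s t \<le> c" "c \<le> max s t" "g c = v"
  proof (cases "s \<le> t")
    case True
    then show thesis
      using IVT'[of g s v t] that v cont st by (fastforce intro: continuous_on_subset)
  next
    case False
    then show thesis
      using IVT2'[of g s v t] that v cont st by (fastforce intro: continuous_on_subset)
  qed
  moreover have "c \<noteq> s" "c \<noteq> t"
    using c(3) v by auto
  ultimately have "c \<in> {a<..<b}"
    using st by (auto simp: min_def max_def split: if_splits)
  then show thesis
    using that c(3) by blast
qed

lemma strict_mono_on_cdf_if_continuous:
  assumes g[measurable]: "g \<in> borel_measurable U01" and cont: "continuous_on {0..1} g"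
  shows "strict_mono_on (g ` {0..1}) (cdf (distr U01 borel g))"
proof (rule strict_mono_onI)
  interpret U01: prob_space U01 by (rule prob_space_U01)
  fix r s assume "r \<in> g ` {0..1}" "s \<in> g ` {0..1}" and "r < s"
  then obtain x y where x: "x \<in> {0..1}" "r = g x" and y: "y \<in> {0..1}" "s = g y"
    by blast
  obtain c where c: "c \<in> {0<..<1}" "g c = (r + s) / 2"
    by (rule IVT_greaterThanLessThan[OF cont x(1) y(1), where v = "(r + s) / 2"])
      (use x y \<open>r < s\<close> in simp_all)
  define A where "A = {0<..<1} \<inter> g -` {r<..<s}"
  have "open A"
    unfolding A_def using cont by (intro continuous_open_preimage) (auto intro: continuous_on_subset)
  then obtain e where "e > 0" and e: "{c - e..c + e} \<subseteq> A"
    using c \<open>r < s\<close> by (force simp: A_def open_contains_cball cball_eq_atLeastAtMost)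
  have between: "{c - e..c + e} \<subseteq> {x\<in>space U01. g x \<le> s} - {x\<in>space U01. g x \<le> r}"
    using e by (auto simp: A_def space_U01)
  have "c - e \<in> A" "c + e \<in> A"
    using e \<open>e > 0\<close> by auto
  then have "2 * e = measure U01 {c - e..c + e}"
    using \<open>e > 0\<close> by (subst measure_U01) (auto simp: A_def)
  also have "\<dots> \<le> measure U01 ({x\<in>space U01. g x \<le> s} - {x\<in>space U01. g x \<le> r})"
    using between by (intro U01.finite_measure_mono) auto
  also have "\<dots> = cdf (distr U01 borel g) s - cdf (distr U01 borel g) r"
    using \<open>r < s\<close> by (subst U01.finite_measure_Diff) (auto simp: cdf_distr)
  finally show "cdf (distr U01 borel g) r < cdf (distr U01 borel g) s"
    using \<open>e > 0\<close> by simp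
qed

lemma gen_inv_eq_if_strict_left:
  assumes "mono F" and "\<And>z. z < y \<Longrightarrow> F z < F y"
  shows "gen_inv F (F y) = y"
  unfolding gen_inv_def
proof (rule cInf_eq_minimum)
  fix x assume "x \<in> {x. F y \<le> F x}"
  then show "y \<le> x"
    using assms(2) by (metis mem_Collect_eq not_le)
qed simp

lemma (in real_distribution) mono_on_gen_inv_cdf: "mono_on {0<..<1} (gen_inv (cdf M))"
proof (rule mono_onI)
  fix a b :: real assume ab: "a \<in> {0<..<1}" "b \<in> {0<..<1}" "a \<le> b"
  have "eventually (\<lambda>x. b < cdf M x) at_top"
    using cdf_lim_at_top_prob ab by (intro order_tendstoD) auto
  then obtain x1 where "b < cdf M x1"
    by (metis eventually_at_top_linorder order.refl)
  then have "{x. b \<le> cdf M x} \<noteq> {}"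
    by (auto intro!: exI[of _ x1])
  moreover have "eventually (\<lambda>x. cdf M x < a) at_bot"
    using cdf_lim_at_bot ab by (intro order_tendstoD) auto
  then obtain x0 where "\<forall>x\<le>x0. cdf M x < a"
    by (metis eventually_at_bot_linorder)
  then have "bdd_below {x. a \<le> cdf M x}"
    by (metis bdd_belowI linorder_not_le mem_Collect_eq less_imp_le)
  ultimately show "gen_inv (cdf M) a \<le> gen_inv (cdf M) b"
    unfolding gen_inv_def using ab by (intro cInf_superset_mono) auto
qed

lemma (in real_distribution) borel_measurable_gen_inv_cdf:
  "gen_inv (cdf M) \<in> borel_measurable borel"
proof (rule measurable_piecewise_restrict[of "{{..0}, {0<..<1}, {1}, {1<..}}"])
  fix \<Omega> :: "real set" assume \<Omega>: "\<Omega> \<in> {{..0}, {0<..<1}, {1}, {1<..}}"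
  have "gen_inv (cdf M) v = Inf UNIV" if "v \<le> 0" for v
    unfolding gen_inv_def using that cdf_nonneg order_trans by (metis UNIV_eq_I mem_Collect_eq)
  moreover have "gen_inv (cdf M) v = Inf {}" if "1 < v" for v
    unfolding gen_inv_def using that cdf_bounded_prob by (metis Collect_empty_eq linorder_not_le order.strict_trans2)
  ultimately have "mono_on \<Omega> (gen_inv (cdf M))"
    using \<Omega> mono_on_gen_inv_cdf by (auto intro: mono_onI)
  then show "gen_inv (cdf M) \<in> borel_measurable (restrict_space borel \<Omega>)"
    by (rule borel_measurable_mono_on_fnc)
qed auto

lemma AE_gen_inv_cdf_comp_eq:
  assumes M: "prob_space M" and X[measurable]: "X \<in> borel_measurable M"
    and cont: "continuous_on UNIV (cdf (distr M borel X))"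
  shows "AE \<omega> in M. gen_inv (cdf (distr M borel X)) (cdf (distr M borel X) (X \<omega>)) = X \<omega>"
proof -
  interpret M: prob_space M by (rule M)
  interpret F: real_distribution "distr M borel X" by simp
  let ?F = "cdf (distr M borel X)"
  note borel_measurable_continuous_onI[OF cont, measurable]
  have "AE \<omega> in M. \<not> (q < X \<omega> \<and> ?F (X \<omega>) \<le> ?F q)" for q
  proof -
    let ?A = "{\<omega>\<in>space M. ?F (X \<omega>) \<le> ?F q}" and ?B = "{\<omega>\<in>space M. X \<omega> \<le> q}"
    have "?B \<subseteq> ?A"
      using F.cdf_nondecreasing by auto
    moreover have "measure M ?A = measure M ?B"
      using measure_cdf_comp_le[OF M X cont, of "?F q"] F.cdf_nonneg[of q] F.cdf_bounded_prob[of q]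
      by (simp add: cdf_distr)
    ultimately have "?A - ?B \<in> null_sets M"
      by (simp add: M.emeasure_eq_measure M.finite_measure_Diff null_sets_def)
    then show ?thesis
      by (rule AE_I') auto
  qed
  then have "AE \<omega> in M. \<forall>q\<in>\<rat>. \<not> (q < X \<omega> \<and> ?F (X \<omega>) \<le> ?F q)"
    by (intro AE_ball_countable') (auto simp: countable_rat)
  then show ?thesis
  proof (rule AE_mp, intro AE_I2 impI)
    fix \<omega> assume no_flat: "\<forall>q\<in>\<rat>. \<not> (q < X \<omega> \<and> ?F (X \<omega>) \<le> ?F q)"
    have "?F z < ?F (X \<omega>)" if z: "z < X \<omega>" for z
    proof -
      obtain q where "q \<in> \<rat>" "z < q" "q < X \<omega>"
        using Rats_dense_in_real[OF z] by blast
      then show ?thesis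
        using no_flat F.cdf_nondecreasing[of z q] by force
    qed
    then show "gen_inv ?F (?F (X \<omega>)) = X \<omega>"
      by (intro gen_inv_eq_if_strict_left) (auto intro: monoI F.cdf_nondecreasing)
  qed
qed

lemma AE_eq_gen_inv_cdf_comp:
  assumes g[measurable]: "g \<in> borel_measurable U01" and cont: "continuous_on UNIV (cdf (distr U01 borel g))"
    and U[measurable]: "U \<in> measurable M U01" and distr_U: "distr M U01 U = U01"
  shows "AE \<omega> in M. g (U \<omega>) = gen_inv (cdf (distr U01 borel g)) (cdf (distr U01 borel g) (g (U \<omega>)))"
proof -
  interpret F: real_distribution "distr U01 borel g"
    using prob_space_U01 g by (rule prob_space.real_distribution_distr)
  note borel_measurable_continuous_onI[OF cont, measurable] F.borel_measurable_gen_inv_cdf[measurable]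
  have "AE u in distr M U01 U. g u = gen_inv (cdf (distr U01 borel g)) (cdf (distr U01 borel g) (g u))"
    unfolding distr_U using AE_gen_inv_cdf_comp_eq[OF prob_space_U01 g cont] by (auto elim: AE_mp)
  then show ?thesis
    by (subst (asm) AE_distr_iff) auto
qed

lemma pearson_cong_AE:
  assumes [measurable]: "X \<in> borel_measurable M" "X' \<in> borel_measurable M"
      "Y \<in> borel_measurable M" "Y' \<in> borel_measurable M"
    and X: "AE \<omega> in M. X \<omega> = X' \<omega>" and Y: "AE \<omega> in M. Y \<omega> = Y' \<omega>"
  shows "pearson M X Y = pearson M X' Y'"
proof -
  have "(\<integral>\<omega>. X \<omega> \<partial>M) = (\<integral>\<omega>. X' \<omega> \<partial>M)" "(\<integral>\<omega>. Y \<omega> \<partial>M) = (\<integral>\<omega>. Y' \<omega> \<partial>M)"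
    using X Y by (auto intro: integral_cong_AE)
  moreover have "(\<integral>\<omega>. (X \<omega> - a) * (Y \<omega> - b) \<partial>M) = (\<integral>\<omega>. (X' \<omega> - a) * (Y' \<omega> - b) \<partial>M)"
    and "(\<integral>\<omega>. (X \<omega> - a)^2 \<partial>M) = (\<integral>\<omega>. (X' \<omega> - a)^2 \<partial>M)"
    and "(\<integral>\<omega>. (Y \<omega> - b)^2 \<partial>M) = (\<integral>\<omega>. (Y' \<omega> - b)^2 \<partial>M)" for a b
    using X Y by (auto intro!: integral_cong_AE elim: AE_mp)
  ultimately show ?thesis
    unfolding pearson_def by simp
qed

lemma unif_preserving_cdf_comp:
  assumes g[measurable]: "g \<in> borel_measurable U01" and cont: "continuous_on UNIV (cdf (distr U01 borel g))"
  shows "unif_preserving (cdf (distr U01 borel g) \<circ> g)"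
  using distr_cdf_comp_borel[OF prob_space_U01 g cont] borel_measurable_continuous_onI[OF cont]
  unfolding unif_preserving_def o_def by simp

lemma borel_measurable_gen_inv_cdf_U01:
  "g \<in> borel_measurable U01 \<Longrightarrow> gen_inv (cdf (distr U01 borel g)) \<in> borel_measurable borel"
  by (intro real_distribution.borel_measurable_gen_inv_cdf prob_space.real_distribution_distr prob_space_U01)

theorem proposition5:
  fixes g h :: "real \<Rightarrow> real"
  assumes "square_integrable01 g" and "square_integrable01 h"
    and "pw_cont_strict_mono g" and "pw_cont_strict_mono h"
  defines "Fg \<equiv> cdf (distr U01 borel g)" and "Fh \<equiv> cdf (distr U01 borel h)"
  defines "Tg \<equiv> Fg \<circ> g" and "Th \<equiv> Fh \<circ> h"
  shows "(continuous_on UNIV Fg \<and> continuous_on UNIV Fh \<and> unif_preserving Tg \<and> unif_preserving Th)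
       \<and> (continuous_on {0..1} g \<and> continuous_on {0..1} h \<longrightarrow>
            strict_mono_on (g ` {0..1}) Fg \<and> strict_mono_on (h ` {0..1}) Fh)
       \<and> (\<forall>(M::'a measure) X Y. prob_space M \<and> X \<in> borel_measurable M \<and> Y \<in> borel_measurable M
            \<and> continuous_on UNIV (cdf (distr M borel X)) \<and> continuous_on UNIV (cdf (distr M borel Y)) \<longrightarrow>
            (let U = (\<lambda>\<omega>. cdf (distr M borel X) (X \<omega>)); V = (\<lambda>\<omega>. cdf (distr M borel Y) (Y \<omega>)) in
              rho_gh M g h X Y = pearson M (\<lambda>\<omega>. g (U \<omega>)) (\<lambda>\<omega>. h (V \<omega>))
              \<and> pearson M (\<lambda>\<omega>. g (U \<omega>)) (\<lambda>\<omega>. h (V \<omega>))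
                = pearson M (\<lambda>\<omega>. gen_inv Fg (Tg (U \<omega>))) (\<lambda>\<omega>. gen_inv Fh (Th (V \<omega>)))))"
proof -
  have g[measurable]: "g \<in> borel_measurable U01" and h[measurable]: "h \<in> borel_measurable U01"
    using assms(1,2) unfolding square_integrable01_def by auto
  have cont_Fg: "continuous_on UNIV Fg" and cont_Fh: "continuous_on UNIV Fh"
    unfolding Fg_def Fh_def using g h assms(3,4)
    by (auto intro: continuous_cdf_if_finite_level_sets finite_level_set_if_pw_cont_strict_mono)
  have [measurable]: "Fg \<in> borel_measurable borel" "Fh \<in> borel_measurable borel"
    using cont_Fg cont_Fh by (auto intro: borel_measurable_continuous_onI)
  have [measurable]: "gen_inv Fg \<in> borel_measurable borel" "gen_inv Fh \<in> borel_measurable borel"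
    unfolding Fg_def Fh_def using g h by (auto intro: borel_measurable_gen_inv_cdf_U01)
  have "pearson M (\<lambda>\<omega>. g (U \<omega>)) (\<lambda>\<omega>. h (V \<omega>))
      = pearson M (\<lambda>\<omega>. gen_inv Fg (Tg (U \<omega>))) (\<lambda>\<omega>. gen_inv Fh (Th (V \<omega>)))"
    if "prob_space M" "X \<in> borel_measurable M" "Y \<in> borel_measurable M"
      "continuous_on UNIV (cdf (distr M borel X))" "continuous_on UNIV (cdf (distr M borel Y))"
      and "U = (\<lambda>\<omega>. cdf (distr M borel X) (X \<omega>))" "V = (\<lambda>\<omega>. cdf (distr M borel Y) (Y \<omega>))"
    for M :: "'a measure" and X Y U V
  proof -
    have [measurable]: "U \<in> measurable M U01" "V \<in> measurable M U01"
      and "distr M U01 U = U01" "distr M U01 V = U01"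
      using that by (auto intro: cdf_comp_measurable_U01 distr_cdf_comp_U01)
    then show ?thesis
      unfolding Tg_def Th_def o_def using cont_Fg cont_Fh
      by (intro pearson_cong_AE) (measurable, auto simp: Fg_def Fh_def intro: AE_eq_gen_inv_cdf_comp)
  qed
  then show ?thesis
    using cont_Fg cont_Fh unif_preserving_cdf_comp[OF g] unif_preserving_cdf_comp[OF h]
      strict_mono_on_cdf_if_continuous[OF g] strict_mono_on_cdf_if_continuous[OF h]
    by (simp add: Fg_def Fh_def Tg_def Th_def rho_gh_def Let_def)
qed

end
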